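(* Let $a$ and $b$ be coprime odd integers, let $\beta$ be a non-negative integer, and let $c$ and $d$ be odd positive integers. Then: 1) If $cd\in G_{(a,b)}(\beta)$, then $c\in G_{(a,b)}(\beta)$ and $d\in G_{(a,b)}(\beta)$. 2) If $\beta\geq2$, then $cd\in G_{(a,b)}(\beta)$ if and only if $c\in G_{(a,b)}(\beta)$ and $d\in G_{(a,b)}(\beta)$.
   Context: For coprime nonzero integers $a,b$ and an integer $\beta\geq0$, $G_{(a,b)}(\beta)$ is the set of positive integers $d$ such that $2^\beta d\mid(a^k+b^k)$ for some positive integer $k$. *)

theory Defs
  imports Main
begin

definition G :: "int \<Rightarrow> int \<Rightarrow> nat \<Rightarrow> int set" where
  "G a b \<beta> = {d. d > 0 \<and> (\<exists>k::nat. k > 0 \<and> (2 ^ \<beta> * d) dvd (a ^ k + b ^ k))}"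

end

theory Submission
  imports Defs "HOL-Number_Theory.Cong"
begin

text \<open>Part 1 holds because membership in \<open>G a b \<beta>\<close> passes to divisors. For part 2, when
  \<open>\<beta> \<ge> 2\<close> and \<open>a, b\<close> are odd, every exponent witnessing membership is odd, since
  \<open>a\<^sup>k + b\<^sup>k \<equiv> 2 (mod 4)\<close> for even \<open>k\<close>. With witnesses \<open>k\<^sub>1\<close> for \<open>c\<close> and \<open>k\<^sub>2\<close> for \<open>d\<close>,
  \<open>T = a\<^sup>k + b\<^sup>k\<close> with \<open>k = k\<^sub>1 k\<^sub>2\<close> is divisible by both \<open>2\<^sup>\<beta> c\<close> and \<open>d\<close>, and
  \<open>a\<^sup>k\<^sup>d + b\<^sup>k\<^sup>d = T \<cdot> Q\<close> where \<open>Q \<equiv> d \<cdot> (a\<^sup>k)\<^sup>d\<^sup>-\<^sup>1 \<equiv> 0 (mod d)\<close>; hence \<open>2\<^sup>\<beta> c d\<close> divides it.\<close>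

lemma sum_odd_powers_factor:
  fixes x y :: "'a :: comm_ring_1"
  assumes "odd n"
  shows "x ^ n + y ^ n = (x + y) * (\<Sum>i<n. (- y) ^ (n - Suc i) * x ^ i)"
proof -
  have "x ^ n - (- y) ^ n = (x - (- y)) * (\<Sum>i<n. (- y) ^ (n - Suc i) * x ^ i)"
    by (rule power_diff_sumr2)
  moreover have "(- y) ^ n = - (y ^ n)"
    using assms by simp
  ultimately show ?thesis
    by simp
qed

lemma dvd_sum_odd_powers_quotient:
  fixes x y m :: int
  assumes "m dvd x + y" and "m dvd int n"
  shows "m dvd (\<Sum>i<n. (- y) ^ (n - Suc i) * x ^ i)"
proof -
  have "[- y = x] (mod m)"
    using assms(1) unfolding cong_iff_dvd_diff
    by (metis add.commute diff_conv_add_uminus dvd_minus_iff minus_add_distrib)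
  then have "[(\<Sum>i<n. (- y) ^ (n - Suc i) * x ^ i) = (\<Sum>i<n. x ^ (n - Suc i) * x ^ i)] (mod m)"
    by (intro cong_sum cong_mult cong_pow cong_refl)
  moreover have "(\<Sum>i<n. x ^ (n - Suc i) * x ^ i) = int n * x ^ (n - 1)"
    by (simp add: power_add [symmetric])
  ultimately show ?thesis
    using assms(2) cong_dvd_iff by fastforce
qed

lemma mult_dvd_sum_odd_powers:
  fixes x y l m :: int
  assumes "odd n" and "l dvd x + y" and "m dvd x + y" and "m dvd int n"
  shows "l * m dvd x ^ n + y ^ n"
  unfolding sum_odd_powers_factor [OF assms(1)]
  using assms(2) dvd_sum_odd_powers_quotient [OF assms(3,4)] by (rule mult_dvd_mono)

lemma sum_powers_dvd_sum_powers_odd_mult: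
  fixes a b :: "'a :: comm_ring_1"
  assumes "odd m"
  shows "a ^ k + b ^ k dvd a ^ (k * m) + b ^ (k * m)"
  unfolding power_mult sum_odd_powers_factor [OF assms, of "a ^ k" "b ^ k"] by (rule dvd_triv_left)

lemma sum_even_powers_mod_4:
  fixes a b :: int
  assumes "odd a" and "odd b" and "even k"
  shows "(a ^ k + b ^ k) mod 4 = 2"
proof -
  obtain j where k: "k = 2 * j"
    using assms(3) by blast
  have square: "[z ^ 2 = 1] (mod 4)" if "odd z" for z :: int
  proof -
    obtain t where "z = 2 * t + 1"
      using \<open>odd z\<close> by (rule oddE)
    then have "z ^ 2 - 1 = 4 * (t ^ 2 + t)"
      by (simp add: power2_eq_square algebra_simps)
    then show ?thesis
      unfolding cong_iff_dvd_diff by simp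
  qed
  have "[(a ^ 2) ^ j + (b ^ 2) ^ j = 1 ^ j + 1 ^ j] (mod 4)"
    by (intro cong_add cong_pow square assms)
  then show ?thesis
    unfolding k power_mult cong_def by simp
qed

lemma odd_exponent_if_4_dvd_sum_powers:
  fixes a b :: int
  assumes "odd a" and "odd b" and "4 dvd a ^ k + b ^ k"
  shows "odd k"
proof
  assume "even k"
  with assms(1,2) have "(a ^ k + b ^ k) mod 4 = 2"
    by (rule sum_even_powers_mod_4)
  with assms(3) show False
    by (simp add: dvd_eq_mod_eq_0)
qed

lemma G_dvd_closed:
  fixes d e :: int
  assumes "d \<in> G a b \<beta>" and "e dvd d" and "e > 0"
  shows "e \<in> G a b \<beta>"
proof -
  obtain k where "k > 0" and "2 ^ \<beta> * d dvd a ^ k + b ^ k"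
    using assms(1) unfolding G_def by blast
  moreover have "2 ^ \<beta> * e dvd 2 ^ \<beta> * d"
    using assms(2) by (rule mult_dvd_mono [OF dvd_refl])
  ultimately show ?thesis
    using assms(3) unfolding G_def by (blast intro: dvd_trans)
qed

lemma G_odd_exponent:
  fixes a b e :: int
  assumes "odd a" and "odd b" and "\<beta> \<ge> 2" and "2 ^ \<beta> * e dvd a ^ k + b ^ k"
  shows "odd k"
proof -
  have "(4 :: int) dvd 2 ^ \<beta>"
    using le_imp_power_dvd [OF \<open>\<beta> \<ge> 2\<close>, of "2 :: int"] by simp
  then have "4 dvd 2 ^ \<beta> * e"
    by (rule dvd_mult2)
  then have "4 dvd a ^ k + b ^ k"
    using assms(4) by (rule dvd_trans)
  with assms(1,2) show ?thesis
    by (rule odd_exponent_if_4_dvd_sum_powers)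
qed

lemma G_mult_closed:
  fixes a b c d :: int
  assumes "odd a" and "odd b" and "\<beta> \<ge> 2" and "odd d"
    and "c \<in> G a b \<beta>" and "d \<in> G a b \<beta>"
  shows "c * d \<in> G a b \<beta>"
proof -
  obtain k\<^sub>1 where "k\<^sub>1 > 0" and c_dvd: "2 ^ \<beta> * c dvd a ^ k\<^sub>1 + b ^ k\<^sub>1" and "c > 0"
    using \<open>c \<in> G a b \<beta>\<close> unfolding G_def by blast
  obtain k\<^sub>2 where "k\<^sub>2 > 0" and d_dvd: "2 ^ \<beta> * d dvd a ^ k\<^sub>2 + b ^ k\<^sub>2" and "d > 0"
    using \<open>d \<in> G a b \<beta>\<close> unfolding G_def by blast
  have "odd k\<^sub>1" and "odd k\<^sub>2"
    using G_odd_exponent [OF assms(1-3)] c_dvd d_dvd by blast+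
  define k where "k = k\<^sub>1 * k\<^sub>2"
  have "2 ^ \<beta> * c dvd a ^ k + b ^ k"
    using dvd_trans [OF c_dvd sum_powers_dvd_sum_powers_odd_mult [OF \<open>odd k\<^sub>2\<close>]]
    unfolding k_def .
  moreover have "d dvd a ^ k + b ^ k"
    using dvd_trans [OF d_dvd sum_powers_dvd_sum_powers_odd_mult [OF \<open>odd k\<^sub>1\<close>]]
    unfolding k_def by (simp add: mult.commute dvd_mult_right)
  moreover have "odd (nat d)" and "d dvd int (nat d)"
    using \<open>odd d\<close> \<open>d > 0\<close> by (simp_all add: even_nat_iff)
  ultimately have "2 ^ \<beta> * (c * d) dvd (a ^ k) ^ nat d + (b ^ k) ^ nat d"
    using mult_dvd_sum_odd_powers by (metis mult.assoc)
  moreover have "k * nat d > 0"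
    using \<open>k\<^sub>1 > 0\<close> \<open>k\<^sub>2 > 0\<close> \<open>d > 0\<close> unfolding k_def by simp
  ultimately show ?thesis
    using \<open>c > 0\<close> \<open>d > 0\<close> unfolding G_def mem_Collect_eq power_mult [symmetric]
    by (metis mult_pos_pos)
qed

theorem proposition2p11:
  fixes a b c d :: int and \<beta> :: nat
  assumes "coprime a b" and "odd a" and "odd b"
    and "odd c" and "odd d" and "c > 0" and "d > 0"
  shows "(c * d \<in> G a b \<beta> \<longrightarrow> c \<in> G a b \<beta> \<and> d \<in> G a b \<beta>)
    \<and> (\<beta> \<ge> 2 \<longrightarrow> (c * d \<in> G a b \<beta> \<longleftrightarrow> c \<in> G a b \<beta> \<and> d \<in> G a b \<beta>))"
proof -
  have "c \<in> G a b \<beta> \<and> d \<in> G a b \<beta>" if "c * d \<in> G a b \<beta>"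
    using G_dvd_closed [OF that] \<open>c > 0\<close> \<open>d > 0\<close> by simp
  moreover have "c * d \<in> G a b \<beta>" if "\<beta> \<ge> 2" "c \<in> G a b \<beta>" "d \<in> G a b \<beta>"
    using G_mult_closed [OF \<open>odd a\<close> \<open>odd b\<close> that(1) \<open>odd d\<close> that(2,3)] .
  ultimately show ?thesis
    by blast
qed

end
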